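(* Let $X$ and $Y$ be real Banach spaces and let $Z$ be a metric linear space (topological vector space) equipped with a translation-invariant metric $d_Z$. Suppose $X$ and $Y$ are linearly and isometrically embedded into $Z$ (so $d_Z(x_1,x_2)=\|x_1-x_2\|_X$ on $X$ and similarly on $Y$). Then $d_K(X,Y)\le d_Z(B_X,B_Y)$, where $d_Z(B_X,B_Y)$ is the Hausdorff distance in $(Z,d_Z)$ between the closed unit balls.
   Context: The Kadets distance $d_K(X,Y)$ is the infimum, over all Banach spaces $W$ and linear isometric embeddings $U:X\to W$, $V:Y\to W$, of the Hausdorff distance in $W$ between $UB_X$ and $VB_Y$. *)

theory Defs
  imports "HOL-Analysis.Analysis" "HOL-Library.Function_Algebras"
begin

instantiation "fun" :: (type, real_vector) real_vector
begin
definition scaleR_fun :: "real \<Rightarrow> ('a \<Rightarrow> 'b) \<Rightarrow> 'a \<Rightarrow> 'b" where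
  "scaleR_fun c f = (\<lambda>x. c *\<^sub>R f x)"
instance by standard (auto simp: scaleR_fun_def fun_eq_iff scaleR_add_right scaleR_add_left)
end

definition hausdorff_dist :: "('w \<Rightarrow> 'w \<Rightarrow> real) \<Rightarrow> 'w set \<Rightarrow> 'w set \<Rightarrow> real" where
  "hausdorff_dist d A B =
     max (SUP a\<in>A. INF b\<in>B. d a b) (SUP b\<in>B. INF a\<in>A. d a b)"

definition banach_on :: "'v::real_vector set \<Rightarrow> ('v \<Rightarrow> real) \<Rightarrow> bool" where
  "banach_on S N \<longleftrightarrow>
     subspace S \<and>
     (\<forall>x\<in>S. 0 \<le> N x) \<and>
     (\<forall>x\<in>S. N x = 0 \<longleftrightarrow> x = 0) \<and>
     (\<forall>c. \<forall>x\<in>S. N (c *\<^sub>R x) = \<bar>c\<bar> * N x) \<and>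
     (\<forall>x\<in>S. \<forall>y\<in>S. N (x + y) \<le> N x + N y) \<and>
     (\<forall>s. (\<forall>n. s n \<in> S) \<and> (\<forall>e>0. \<exists>M. \<forall>m\<ge>M. \<forall>n\<ge>M. N (s m - s n) < e)
          \<longrightarrow> (\<exists>l\<in>S. (\<lambda>n. N (s n - l)) \<longlonglongrightarrow> 0))"

text \<open>The ambient Banach space W ranges over all Banach spaces realised as
  subspaces of the real vector space of functions on the index type nat => 'a * 'b; every
  Banach space of Hamel dimension at most |nat => 'a * 'b| is (linearly isometrically) of
  this form, and this covers the closed span of U X + V Y for any W, U, V.\<close>
definition kadets_dist :: "'a::banach itself \<Rightarrow> 'b::banach itself \<Rightarrow> real" where
  "kadets_dist _ _ = Inf {hausdorff_dist (\<lambda>u v. N (u - v)) (U ` cball 0 1) (V ` cball 0 1) |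
      (S :: ((nat \<Rightarrow> 'a \<times> 'b) \<Rightarrow> real) set) N (U :: 'a \<Rightarrow> ((nat \<Rightarrow> 'a \<times> 'b) \<Rightarrow> real))
      (V :: 'b \<Rightarrow> ((nat \<Rightarrow> 'a \<times> 'b) \<Rightarrow> real)).
      banach_on S N \<and> linear U \<and> linear V \<and> range U \<subseteq> S \<and> range V \<subseteq> S \<and>
      (\<forall>x. N (U x) = norm x) \<and> (\<forall>y. N (V y) = norm y)}"

end

(* The metric of Z is not a norm on f X + g Y, but its homogenisation
   q z = inf_n d(n z, 0) / n is one: translation invariance makes q subadditive and even,
   it is homogeneous under positive integers, hence under rationals, and hence under all
   reals because q (f x + g y) <= |x| + |y| bounds it along lines.  So
   Q (x, y) = q (f x + g y) is a seminorm on X \<times> Y with Q (x, 0) = |x|, Q (0, y) = |y|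
   and Q (x, -y) <= d (f x, g y).  Q may vanish off 0 (f X and g Y can meet), but for
   0 < \<epsilon> <= 1 the norm max Q (\<epsilon> |.|) is complete, still restricts to the norms of X and Y,
   and the unit balls of X and Y are at Hausdorff distance at most d_Z(B_X, B_Y) + 2 \<epsilon> in it. *)
theory Submission
  imports Defs
begin

lemma SUP_INF_le_SUP_INF_plus:
  fixes h1 h2 :: "'i \<Rightarrow> 'j \<Rightarrow> real"
  assumes I: "I \<noteq> {}" and J: "J \<noteq> {}"
    and nonneg: "\<And>i j. i \<in> I \<Longrightarrow> j \<in> J \<Longrightarrow> 0 \<le> h1 i j"
    and bounded: "\<And>i j. i \<in> I \<Longrightarrow> j \<in> J \<Longrightarrow> h2 i j \<le> K"
    and le: "\<And>i j. i \<in> I \<Longrightarrow> j \<in> J \<Longrightarrow> h1 i j \<le> h2 i j + e"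
  shows "(SUP i\<in>I. INF j\<in>J. h1 i j) \<le> (SUP i\<in>I. INF j\<in>J. h2 i j) + e"
proof (rule cSUP_least[OF I])
  fix i assume i: "i \<in> I"
  have "(INF j\<in>J. h1 i j) - e \<le> (INF j\<in>J. h2 i j)"
  proof (rule cINF_greatest[OF J])
    fix j assume j: "j \<in> J"
    have "(INF j\<in>J. h1 i j) \<le> h1 i j"
      using i j nonneg by (intro cINF_lower) (auto intro!: bdd_belowI[where m=0])
    then show "(INF j\<in>J. h1 i j) - e \<le> h2 i j" using le[OF i j] by simp
  qed
  also have "(INF j\<in>J. h2 i j) \<le> (SUP i\<in>I. INF j\<in>J. h2 i j)"
  proof (rule cSUP_upper[OF i], rule bdd_aboveI2)
    fix i' assume i': "i' \<in> I"
    obtain j where j: "j \<in> J" using J by blast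
    have "(INF j\<in>J. h2 i' j) \<le> h2 i' j"
      using i' j nonneg[of i'] le[of i'] by (intro cINF_lower bdd_belowI2[where m="-e"]) force+
    then show "(INF j\<in>J. h2 i' j) \<le> K" using bounded[OF i' j] by simp
  qed
  finally show "(INF j\<in>J. h1 i j) \<le> (SUP i\<in>I. INF j\<in>J. h2 i j) + e" by simp
qed

lemma hausdorff_dist_image_le:
  assumes "I \<noteq> {}" and "J \<noteq> {}"
    and "\<And>i j. i \<in> I \<Longrightarrow> j \<in> J \<Longrightarrow> 0 \<le> d1 (U i) (V j)"
    and "\<And>i j. i \<in> I \<Longrightarrow> j \<in> J \<Longrightarrow> d2 (F i) (G j) \<le> K"
    and "\<And>i j. i \<in> I \<Longrightarrow> j \<in> J \<Longrightarrow> d1 (U i) (V j) \<le> d2 (F i) (G j) + e"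
  shows "hausdorff_dist d1 (U ` I) (V ` J) \<le> hausdorff_dist d2 (F ` I) (G ` J) + e"
proof -
  have "(SUP i\<in>I. INF j\<in>J. d1 (U i) (V j)) \<le> (SUP i\<in>I. INF j\<in>J. d2 (F i) (G j)) + e"
    by (rule SUP_INF_le_SUP_INF_plus) (use assms in auto)
  moreover have "(SUP j\<in>J. INF i\<in>I. d1 (U i) (V j)) \<le> (SUP j\<in>J. INF i\<in>I. d2 (F i) (G j)) + e"
    by (rule SUP_INF_le_SUP_INF_plus) (use assms in auto)
  ultimately show ?thesis
    unfolding hausdorff_dist_def image_image by (auto simp: max_def)
qed

lemma hausdorff_dist_nonneg:
  assumes A: "A \<noteq> {}" and B: "B \<noteq> {}"
    and d: "\<And>a b. a \<in> A \<Longrightarrow> b \<in> B \<Longrightarrow> 0 \<le> d a b \<and> d a b \<le> K"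
  shows "0 \<le> hausdorff_dist d A B"
proof -
  obtain a b where a: "a \<in> A" and b: "b \<in> B" using A B by blast
  have "0 \<le> (INF b\<in>B. d a b)"
    using B a d by (intro cINF_greatest) auto
  also have "\<dots> \<le> (SUP a\<in>A. INF b\<in>B. d a b)"
  proof (rule cSUP_upper[OF a], rule bdd_aboveI2)
    fix a' assume a': "a' \<in> A"
    have "(INF b\<in>B. d a' b) \<le> d a' b"
      using a' b d by (intro cINF_lower) (auto intro!: bdd_belowI2[where m=0])
    then show "(INF b\<in>B. d a' b) \<le> K" using d[OF a' b] by simp
  qed
  finally show ?thesis unfolding hausdorff_dist_def by simp
qed

section \<open>Realising a Banach space in the Kadets distance\<close>

lemma exists_linear_inj_to_fun:
  fixes h :: "'v::real_vector \<Rightarrow> 'i"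
  assumes "inj h"
  shows "\<exists>E :: 'v \<Rightarrow> ('i \<Rightarrow> real). linear E \<and> inj E"
proof -
  define B :: "'v set" where "B = extend_basis {}"
  have indB: "independent B" and spanB: "\<And>v. v \<in> span B"
    unfolding B_def
    using real_vector.independent_extend_basis[OF real_vector.independent_empty]
      real_vector.span_extend_basis[OF real_vector.independent_empty] by auto
  define E :: "'v \<Rightarrow> 'i \<Rightarrow> real" where "E v = (\<lambda>t. representation B v (inv h t))" for v
  have "linear E"
    by (rule linearI) (simp_all add: E_def fun_eq_iff scaleR_fun_def
        real_vector.representation_add[OF indB spanB spanB]
        real_vector.representation_scale[OF indB spanB])
  moreover have "inj E"
  proof (rule injI)
    fix v w assume "E v = E w"
    then have "representation B v b = representation B w b" for b
      using fun_cong[of "E v" "E w" "h b"] \<open>inj h\<close> unfolding E_def by simp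
    then show "v = w"
      by (metis ext real_vector.sum_nonzero_representation_eq[OF indB spanB])
  qed
  ultimately show ?thesis by blast
qed

lemma banach_on_range_linear_inj:
  assumes N: "banach_on UNIV N" and E: "linear E" "inj E"
  shows "banach_on (range E) (\<lambda>w. N (inv E w))"
proof -
  have [simp]: "inv E (E v) = v" for v using E by simp
  have inv_E: "\<And>w. w \<in> range E \<Longrightarrow> w = E (inv E w)" by (simp add: f_inv_into_f)
  have [simp]: "E v + E w = E (v + w)" "c *\<^sub>R E v = E (c *\<^sub>R v)" "E v - E w = E (v - w)"
    "E v = 0 \<longleftrightarrow> v = 0" for v w c
    using E by (simp_all add: linear_add linear_scale linear_diff) (metis injD linear_0)
  have "\<exists>l\<in>range E. (\<lambda>n. N (inv E (s n - l))) \<longlonglongrightarrow> 0"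
    if range: "\<forall>n. s n \<in> range E" and Cauchy: "\<forall>e>0. \<exists>M. \<forall>m\<ge>M. \<forall>n\<ge>M. N (inv E (s m - s n)) < e" for s
  proof -
    define v where "v n = inv E (s n)" for n
    have s: "s = (\<lambda>n. E (v n))" using range inv_E by (auto simp: v_def)
    obtain l where "(\<lambda>n. N (v n - l)) \<longlonglongrightarrow> 0"
      using N Cauchy unfolding banach_on_def s by force
    then show ?thesis unfolding s by auto
  qed
  moreover have "subspace (range E)"
    using E real_vector.linear_subspace_image real_vector.subspace_UNIV by blast
  ultimately show ?thesis
    using N unfolding banach_on_def by auto
qed

lemma banach_on_diff_le:
  assumes S: "banach_on S N" and uv: "u \<in> S" "v \<in> S"
  shows "0 \<le> N (u - v)" "N (u - v) \<le> N u + N v"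
proof -
  have sub: "subspace S" and N: "\<forall>x\<in>S. 0 \<le> N x" "\<forall>c. \<forall>x\<in>S. N (c *\<^sub>R x) = \<bar>c\<bar> * N x"
      "\<forall>x\<in>S. \<forall>y\<in>S. N (x + y) \<le> N x + N y"
    using S unfolding banach_on_def by simp_all
  have "- v \<in> S" "u - v \<in> S"
    using sub uv by (simp_all add: real_vector.subspace_neg real_vector.subspace_diff)
  moreover have "N (- v) = N v"
    using N(2) uv(2) by (metis abs_neg_one mult_1 scaleR_minus1_left)
  moreover have "N (u + - v) \<le> N u + N (- v)"
    using N(3) uv \<open>- v \<in> S\<close> by blast
  ultimately show "0 \<le> N (u - v)" "N (u - v) \<le> N u + N v"
    using N(1) by simp_all
qed

lemma hausdorff_dist_unit_balls_nonneg:
  fixes U :: "'a::real_normed_vector \<Rightarrow> 'v::real_vector" and V :: "'b::real_normed_vector \<Rightarrow> 'v"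
  assumes S: "banach_on S N" and UV: "range U \<subseteq> S" "range V \<subseteq> S"
    and norm_U: "\<forall>x. N (U x) = norm x" and norm_V: "\<forall>y. N (V y) = norm y"
  shows "0 \<le> hausdorff_dist (\<lambda>u v. N (u - v)) (U ` cball 0 1) (V ` cball 0 1)"
proof (rule hausdorff_dist_nonneg[where K=2])
  fix a b assume "a \<in> U ` cball 0 1" "b \<in> V ` cball 0 1"
  then obtain x y where ab: "a = U x" "b = V y" and xy: "norm x \<le> 1" "norm y \<le> 1" by auto
  then have "a \<in> S" "b \<in> S" using UV by auto
  then show "0 \<le> N (a - b) \<and> N (a - b) \<le> 2"
    using banach_on_diff_le[OF S, of a b] norm_U norm_V ab xy by auto
qed auto

lemma kadets_dist_le_hausdorff_dist:
  fixes S :: "((nat \<Rightarrow> 'a::banach \<times> 'b::banach) \<Rightarrow> real) set"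
    and U :: "'a \<Rightarrow> (nat \<Rightarrow> 'a \<times> 'b) \<Rightarrow> real" and V :: "'b \<Rightarrow> (nat \<Rightarrow> 'a \<times> 'b) \<Rightarrow> real"
  assumes "banach_on S N" "linear U" "linear V" "range U \<subseteq> S" "range V \<subseteq> S"
    "\<forall>x. N (U x) = norm x" "\<forall>y. N (V y) = norm y"
  shows "kadets_dist TYPE('a) TYPE('b) \<le> hausdorff_dist (\<lambda>u v. N (u - v)) (U ` cball 0 1) (V ` cball 0 1)"
  unfolding kadets_dist_def
  by (rule cInf_lower) (use assms in blast, auto intro!: bdd_belowI[where m=0] hausdorff_dist_unit_balls_nonneg)

lemma rat_homogeneous_if_nat_homogeneous:
  fixes Q :: "'v::real_vector \<Rightarrow> real"
  assumes minus: "\<And>v. Q (- v) = Q v"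
    and nat: "\<And>n v. Q (real n *\<^sub>R v) = real n * Q v"
    and r: "r \<in> \<rat>"
  shows "Q (r *\<^sub>R v) = \<bar>r\<bar> * Q v"
proof -
  have int: "Q (of_int i *\<^sub>R v) = \<bar>of_int i\<bar> * Q v" for i :: int
  proof (cases "0 \<le> i")
    case True
    then show ?thesis using nat[of "nat i" v] by simp
  next
    case False
    then show ?thesis using nat[of "nat (- i)" v] minus[of "real (nat (- i)) *\<^sub>R v"] by simp
  qed
  obtain i n where i_n: "r = of_int i / real n" and "n \<noteq> 0"
    using r unfolding Rats_eq_int_div_nat by blast
  then have "real n * Q (r *\<^sub>R v) = Q (of_int i *\<^sub>R v)"
    using nat[of n "r *\<^sub>R v"] by simp
  also have "\<dots> = \<bar>of_int i\<bar> * Q v"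
    by (rule int)
  also have "\<bar>of_int i\<bar> = real n * \<bar>r\<bar>"
    using \<open>n \<noteq> 0\<close> unfolding i_n by (simp add: abs_divide)
  finally show ?thesis using \<open>n \<noteq> 0\<close> by simp
qed

lemma homogeneous_if_nat_homogeneous:
  fixes Q :: "'v::real_normed_vector \<Rightarrow> real"
  assumes add: "\<And>v w. Q (v + w) \<le> Q v + Q w"
    and minus: "\<And>v. Q (- v) = Q v"
    and nat: "\<And>n v. Q (real n *\<^sub>R v) = real n * Q v"
    and bounded: "\<And>v. Q v \<le> K * norm v"
  shows "Q (c *\<^sub>R v) = \<bar>c\<bar> * Q v"
proof -
  have lipschitz: "\<bar>Q v - Q w\<bar> \<le> \<bar>K\<bar> * norm (v - w)" for v w
  proof -
    have "Q v \<le> Q w + Q (v - w)" "Q w \<le> Q v + Q (v - w)"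
      using add[of w "v - w"] add[of v "w - v"] minus[of "v - w"] by simp_all
    moreover have "K * norm (v - w) \<le> \<bar>K\<bar> * norm (v - w)"
      by (simp add: mult_right_mono)
    ultimately show ?thesis using bounded[of "v - w"] by linarith
  qed
  have "0 \<le> Q v"
    using add[of v "- v"] minus[of v] nat[of 0 v] by simp
  define M where "M = \<bar>K\<bar> * norm v + Q v + 1"
  have "M > 0" using \<open>0 \<le> Q v\<close> unfolding M_def by (intro add_nonneg_pos add_nonneg_nonneg) simp_all
  have "\<bar>Q (c *\<^sub>R v) - \<bar>c\<bar> * Q v\<bar> \<le> 0 + e" if "e > 0" for e
  proof -
    obtain r where r: "r \<in> \<rat>" "c < r" "r < c + e / M"
      using Rats_dense_in_real[of c "c + e / M"] \<open>e > 0\<close> \<open>M > 0\<close> by auto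
    have "\<bar>Q (c *\<^sub>R v) - \<bar>c\<bar> * Q v\<bar> \<le> \<bar>Q (c *\<^sub>R v) - Q (r *\<^sub>R v)\<bar> + \<bar>\<bar>r\<bar> * Q v - \<bar>c\<bar> * Q v\<bar>"
      using abs_triangle_ineq[of "Q (c *\<^sub>R v) - Q (r *\<^sub>R v)" "Q (r *\<^sub>R v) - \<bar>c\<bar> * Q v"]
        rat_homogeneous_if_nat_homogeneous[OF minus nat r(1)] by simp
    also have "\<bar>Q (c *\<^sub>R v) - Q (r *\<^sub>R v)\<bar> \<le> \<bar>c - r\<bar> * (\<bar>K\<bar> * norm v)"
      using lipschitz[of "c *\<^sub>R v" "r *\<^sub>R v"] by (simp add: scaleR_diff_left[symmetric] mult_ac)
    also have "\<bar>\<bar>r\<bar> * Q v - \<bar>c\<bar> * Q v\<bar> \<le> \<bar>c - r\<bar> * Q v"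
      using \<open>0 \<le> Q v\<close> abs_triangle_ineq3[of r c]
      by (simp add: left_diff_distrib[symmetric] abs_mult mult_right_mono)
    also have "\<bar>c - r\<bar> * (\<bar>K\<bar> * norm v) + \<bar>c - r\<bar> * Q v \<le> \<bar>c - r\<bar> * M"
      by (simp add: M_def distrib_left)
    also have "\<bar>c - r\<bar> * M \<le> e"
      using r \<open>M > 0\<close> by (simp add: field_simps)
    finally show ?thesis by simp
  qed
  then show ?thesis
    using field_le_epsilon[of "\<bar>Q (c *\<^sub>R v) - \<bar>c\<bar> * Q v\<bar>" 0] by simp
qed

lemma banach_on_max_seminorm_norm:
  fixes Q :: "'v::banach \<Rightarrow> real"
  assumes add: "\<And>v w. Q (v + w) \<le> Q v + Q w"
    and scale: "\<And>c v. Q (c *\<^sub>R v) = \<bar>c\<bar> * Q v"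
    and bounded: "\<And>v. Q v \<le> K * norm v"
    and "0 < \<epsilon>"
  shows "banach_on UNIV (\<lambda>v. max (Q v) (\<epsilon> * norm v))"
proof -
  let ?N = "\<lambda>v. max (Q v) (\<epsilon> * norm v)"
  have N_ge: "\<epsilon> * norm v \<le> ?N v" for v by simp
  have N_nonneg: "0 \<le> ?N v" for v
    using N_ge[of v] \<open>0 < \<epsilon>\<close> by (smt (verit) norm_ge_zero zero_le_mult_iff)
  have N_le: "?N v \<le> max K \<epsilon> * norm v" for v
    using bounded[of v] by (auto intro: order_trans[OF _ mult_right_mono])
  have "?N (v + w) \<le> ?N v + ?N w" for v w
  proof -
    have "\<epsilon> * norm (v + w) \<le> \<epsilon> * norm v + \<epsilon> * norm w"
      using norm_triangle_ineq[of v w] \<open>0 < \<epsilon>\<close> by (simp flip: distrib_left)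
    then show ?thesis
      using add[of v w] max.cobounded1[of "Q v"] max.cobounded1[of "Q w"]
        max.cobounded2[of _ "\<epsilon> * norm v"] max.cobounded2[of _ "\<epsilon> * norm w"]
      by (intro max.boundedI) linarith+
  qed
  moreover have "?N (c *\<^sub>R v) = \<bar>c\<bar> * ?N v" for c v
    using \<open>0 < \<epsilon>\<close> by (simp add: scale max_mult_distrib_left mult.left_commute)
  moreover have "?N v = 0 \<longleftrightarrow> v = 0" for v
    using N_ge[of v] scale[of 0 0] \<open>0 < \<epsilon>\<close> by (auto simp: max_def)
  moreover have "\<exists>l. (\<lambda>n. ?N (s n - l)) \<longlonglongrightarrow> 0"
    if Cauchy_N: "\<forall>e>0. \<exists>M. \<forall>m\<ge>M. \<forall>n\<ge>M. ?N (s m - s n) < e" for s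
  proof -
    have "Cauchy s"
    proof (rule metric_CauchyI)
      fix e :: real assume "e > 0"
      then obtain M where "\<forall>m\<ge>M. \<forall>n\<ge>M. ?N (s m - s n) < \<epsilon> * e"
        using Cauchy_N \<open>0 < \<epsilon>\<close> by (meson mult_pos_pos)
      then show "\<exists>M. \<forall>m\<ge>M. \<forall>n\<ge>M. dist (s m) (s n) < e"
        using N_ge \<open>0 < \<epsilon>\<close> by (metis dist_norm order.strict_trans1 mult_less_cancel_left_pos)
    qed
    then obtain l where "s \<longlonglongrightarrow> l" using Cauchy_convergent convergent_def by blast
    then have "(\<lambda>n. max K \<epsilon> * norm (s n - l)) \<longlonglongrightarrow> 0"
      by (intro tendsto_mult_right_zero tendsto_norm_zero LIM_zero)
    then have "(\<lambda>n. ?N (s n - l)) \<longlonglongrightarrow> 0"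
      by (rule tendsto_sandwich[rotated 2, OF tendsto_const]) (blast intro: always_eventually N_le N_nonneg)+
    then show ?thesis by blast
  qed
  ultimately show ?thesis
    unfolding banach_on_def using N_nonneg by auto
qed

section \<open>The stable norm of a translation-invariant metric\<close>

text \<open>For a translation-invariant metric, \<^term>\<open>dist (real n *\<^sub>R z) 0\<close> is subadditive in n,
  so by Fekete's lemma the infimum below is also the limit of the quotients.\<close>
definition stable_norm :: "'z::{real_vector, metric_space} \<Rightarrow> real" where
  "stable_norm z = (INF n\<in>{1::nat..}. dist (real n *\<^sub>R z) 0 / real n)"

lemma stable_norm_le: "1 \<le> n \<Longrightarrow> stable_norm z \<le> dist (real n *\<^sub>R z) 0 / real n"
  unfolding stable_norm_def by (rule cINF_lower) (auto intro!: bdd_belowI[where m=0])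

lemma stable_norm_greatest:
  "(\<And>n. 1 \<le> n \<Longrightarrow> c \<le> dist (real n *\<^sub>R z) 0 / real n) \<Longrightarrow> c \<le> stable_norm z"
  unfolding stable_norm_def by (rule cINF_greatest) auto

lemma stable_norm_nonneg: "0 \<le> stable_norm z"
  by (rule stable_norm_greatest) simp

lemma stable_norm_le_dist: "stable_norm z \<le> dist z 0"
  using stable_norm_le[of 1 z] by simp

locale translation_invariant_metric =
  assumes dist_add_right: "\<forall>x y z::'z::{real_vector, metric_space}. dist (x + z) (y + z) = dist x y"
begin

lemma dist_diff_0: "dist (a - b) 0 = dist a (b::'z)"
  using dist_add_right by (metis add_0 diff_add_cancel)

lemma dist_add_0_le: "dist (a + b) 0 \<le> dist a 0 + dist (b::'z) 0"
  using dist_triangle[of "a + b" 0 b] dist_diff_0[of "a + b" b] by (simp add: dist_commute)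

lemma dist_minus_0: "dist (- a) 0 = dist (a::'z) 0"
  using dist_diff_0[of 0 a] by (simp add: dist_commute)

lemma dist_scaleR_nat_0_le: "dist (real k *\<^sub>R a) 0 \<le> real k * dist (a::'z) 0"
proof (induction k)
  case (Suc k)
  then show ?case
    using dist_add_0_le[of a "real k *\<^sub>R a"] by (simp add: algebra_simps)
qed simp

lemma stable_norm_add: "stable_norm (a + b) \<le> stable_norm a + stable_norm (b::'z)"
proof -
  have "stable_norm (a + b) \<le> dist (real n *\<^sub>R a) 0 / real n + dist (real m *\<^sub>R b) 0 / real m"
    if "1 \<le> n" "1 \<le> m" for n m
  proof -
    have "stable_norm (a + b) \<le> dist (real (n * m) *\<^sub>R (a + b)) 0 / real (n * m)"
      using that by (intro stable_norm_le) simp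
    also have "\<dots> \<le> (real m * dist (real n *\<^sub>R a) 0 + real n * dist (real m *\<^sub>R b) 0) / real (n * m)"
    proof (rule divide_right_mono)
      have "dist (real (n * m) *\<^sub>R (a + b)) 0
          \<le> dist (real m *\<^sub>R (real n *\<^sub>R a)) 0 + dist (real n *\<^sub>R (real m *\<^sub>R b)) 0"
        using dist_add_0_le by (simp add: scaleR_add_right mult.commute)
      then show "dist (real (n * m) *\<^sub>R (a + b)) 0
          \<le> real m * dist (real n *\<^sub>R a) 0 + real n * dist (real m *\<^sub>R b) 0"
        using dist_scaleR_nat_0_le[of m "real n *\<^sub>R a"] dist_scaleR_nat_0_le[of n "real m *\<^sub>R b"]
        by linarith
    qed simp
    also have "\<dots> = dist (real n *\<^sub>R a) 0 / real n + dist (real m *\<^sub>R b) 0 / real m"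
      using that by (simp add: field_simps)
    finally show ?thesis .
  qed
  then have "stable_norm (a + b) - dist (real m *\<^sub>R b) 0 / real m \<le> stable_norm a"
    if "1 \<le> m" for m
    using that by (intro stable_norm_greatest) (simp add: algebra_simps)
  then have "stable_norm (a + b) - stable_norm a \<le> stable_norm b"
    by (intro stable_norm_greatest) (simp add: algebra_simps)
  then show ?thesis by simp
qed

lemma stable_norm_minus: "stable_norm (- a) = stable_norm (a::'z)"
  unfolding stable_norm_def by (simp flip: dist_minus_0[of "real _ *\<^sub>R a"])

lemma stable_norm_scaleR_nat: "stable_norm (real k *\<^sub>R a) = real k * stable_norm (a::'z)"
proof (cases "k = 0")
  case True
  then show ?thesis
    using stable_norm_le_dist[of "0::'z"] stable_norm_nonneg[of "0::'z"] by simp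
next
  case False
  have "stable_norm (real k *\<^sub>R a) \<le> real k * stable_norm a"
  proof -
    have "stable_norm (real k *\<^sub>R a) / real k \<le> dist (real n *\<^sub>R a) 0 / real n" if "1 \<le> n" for n
    proof -
      have "stable_norm (real k *\<^sub>R a) \<le> dist (real k *\<^sub>R (real n *\<^sub>R a)) 0 / real n"
        using stable_norm_le[OF that, of "real k *\<^sub>R a"] by (simp add: mult.commute)
      also have "\<dots> \<le> real k * dist (real n *\<^sub>R a) 0 / real n"
        by (rule divide_right_mono[OF dist_scaleR_nat_0_le]) simp
      finally show ?thesis using False that by (simp add: field_simps)
    qed
    then have "stable_norm (real k *\<^sub>R a) / real k \<le> stable_norm a"
      by (rule stable_norm_greatest)
    then show ?thesis
      using False by (simp add: field_simps)
  qed
  moreover have "real k * stable_norm a \<le> stable_norm (real k *\<^sub>R a)"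
  proof (rule stable_norm_greatest)
    fix n :: nat assume "1 \<le> n"
    then have "stable_norm a \<le> dist (real (n * k) *\<^sub>R a) 0 / real (n * k)"
      using False by (intro stable_norm_le) simp
    then show "real k * stable_norm a \<le> dist (real n *\<^sub>R (real k *\<^sub>R a)) 0 / real n"
      using False \<open>1 \<le> n\<close> by (simp add: field_simps)
  qed
  ultimately show ?thesis by simp
qed

end

locale isometric_linear_embeddings = translation_invariant_metric +
  fixes f :: "'a::banach \<Rightarrow> 'z::{real_vector, metric_space}" and g :: "'b::banach \<Rightarrow> 'z"
  assumes linear_f: "linear f" and linear_g: "linear g"
    and isometric_f: "\<forall>x1 x2. dist (f x1) (f x2) = norm (x1 - x2)"
    and isometric_g: "\<forall>y1 y2. dist (g y1) (g y2) = norm (y1 - y2)"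
begin

definition joint_seminorm :: "'a \<times> 'b \<Rightarrow> real" where
  "joint_seminorm v = stable_norm (f (fst v) + g (snd v))"

lemma dist_f_0: "dist (f x) 0 = norm x"
  using isometric_f linear_0[OF linear_f] by (metis diff_zero)

lemma dist_g_0: "dist (g y) 0 = norm y"
  using isometric_g linear_0[OF linear_g] by (metis diff_zero)

lemma stable_norm_f: "stable_norm (f x) = norm x"
proof (rule antisym)
  show "stable_norm (f x) \<le> norm x"
    using stable_norm_le_dist[of "f x"] dist_f_0 by simp
  show "norm x \<le> stable_norm (f x)"
    by (rule stable_norm_greatest) (simp add: dist_f_0 flip: linear_scale[OF linear_f])
qed

lemma stable_norm_g: "stable_norm (g y) = norm y"
proof (rule antisym)
  show "stable_norm (g y) \<le> norm y"
    using stable_norm_le_dist[of "g y"] dist_g_0 by simp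
  show "norm y \<le> stable_norm (g y)"
    by (rule stable_norm_greatest) (simp add: dist_g_0 flip: linear_scale[OF linear_g])
qed

lemma linear_joint_map: "linear (\<lambda>v. f (fst v) + g (snd v))"
  using linear_f linear_g
  by (intro linearI) (simp_all add: linear_add linear_scale scaleR_add_right)

lemma joint_seminorm_add: "joint_seminorm (v + w) \<le> joint_seminorm v + joint_seminorm w"
  unfolding joint_seminorm_def
  using stable_norm_add linear_add[OF linear_joint_map, of v w] by simp

lemma joint_seminorm_minus: "joint_seminorm (- v) = joint_seminorm v"
proof -
  have "f (fst (- v)) + g (snd (- v)) = - (f (fst v) + g (snd v))"
    using linear_neg[OF linear_joint_map, of v] by simp
  then show ?thesis
    unfolding joint_seminorm_def by (simp only: stable_norm_minus)
qed

lemma joint_seminorm_scaleR_nat: "joint_seminorm (real n *\<^sub>R v) = real n * joint_seminorm v"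
  unfolding joint_seminorm_def
  using stable_norm_scaleR_nat linear_scale[OF linear_joint_map, of "real n" v] by simp

lemma joint_seminorm_le_norm: "joint_seminorm v \<le> 2 * norm v"
proof -
  have "joint_seminorm v \<le> dist (f (fst v)) 0 + dist (g (snd v)) 0"
    unfolding joint_seminorm_def using stable_norm_le_dist dist_add_0_le order_trans by blast
  also have "\<dots> \<le> 2 * norm v"
    using norm_fst_le[of "fst v" "snd v"] norm_snd_le[of "snd v" "fst v"] by (simp add: dist_f_0 dist_g_0)
  finally show ?thesis .
qed

lemma joint_seminorm_scaleR: "joint_seminorm (c *\<^sub>R v) = \<bar>c\<bar> * joint_seminorm v"
  by (rule homogeneous_if_nat_homogeneous[OF joint_seminorm_add joint_seminorm_minus
        joint_seminorm_scaleR_nat joint_seminorm_le_norm])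

lemma joint_seminorm_Pair_0: "joint_seminorm (x, 0) = norm x"
  unfolding joint_seminorm_def by (simp add: linear_0[OF linear_g] stable_norm_f)

lemma joint_seminorm_0_Pair: "joint_seminorm (0, y) = norm y"
  unfolding joint_seminorm_def by (simp add: linear_0[OF linear_f] stable_norm_g)

lemma joint_seminorm_le_dist: "joint_seminorm (x, - y) \<le> dist (f x) (g y)"
  unfolding joint_seminorm_def
  using stable_norm_le_dist[of "f x - g y"] by (simp add: linear_neg[OF linear_g] dist_diff_0)

lemma kadets_dist_le_hausdorff_dist_plus:
  assumes "0 < \<epsilon>" "\<epsilon> \<le> 1"
  shows "kadets_dist TYPE('a) TYPE('b) \<le> hausdorff_dist dist (f ` cball 0 1) (g ` cball 0 1) + 2 * \<epsilon>"
proof -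
  define N\<^sub>0 where "N\<^sub>0 v = max (joint_seminorm v) (\<epsilon> * norm v)" for v
  have "banach_on UNIV N\<^sub>0"
    unfolding N\<^sub>0_def using joint_seminorm_add joint_seminorm_scaleR joint_seminorm_le_norm \<open>0 < \<epsilon>\<close>
    by (rule banach_on_max_seminorm_norm)
  obtain E :: "'a \<times> 'b \<Rightarrow> (nat \<Rightarrow> 'a \<times> 'b) \<Rightarrow> real" where E: "linear E" "inj E"
    using exists_linear_inj_to_fun[of "\<lambda>v (_::nat). v"] by (auto simp: inj_def fun_eq_iff)
  define N where "N w = N\<^sub>0 (inv E w)" for w
  define U where "U x = E (x, 0)" for x
  define V where "V y = E (0, y)" for y
  have [simp]: "inv E (E v) = v" for v using E by simp
  have "U x - V y = E (x, - y)" for x y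
    using linear_diff[OF E(1), of "(x, 0)" "(0, y)"] by (simp add: U_def V_def)
  then have N_UV: "N (U x - V y) = N\<^sub>0 (x, - y)" for x y
    by (simp add: N_def)
  have "kadets_dist TYPE('a) TYPE('b) \<le> hausdorff_dist (\<lambda>u v. N (u - v)) (U ` cball 0 1) (V ` cball 0 1)"
  proof (rule kadets_dist_le_hausdorff_dist)
    show "banach_on (range E) N"
      unfolding N_def using \<open>banach_on UNIV N\<^sub>0\<close> E by (rule banach_on_range_linear_inj)
    have "linear (\<lambda>x. (x, 0::'b))" "linear (\<lambda>y. (0::'a, y))"
      by (auto intro!: linearI)
    then show "linear U" "linear V"
      unfolding U_def V_def using linear_compose[OF _ E(1)] by (simp_all add: o_def)
    show "range U \<subseteq> range E" "range V \<subseteq> range E"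
      by (auto simp: U_def V_def)
    have "max t (\<epsilon> * t) = t" if "0 \<le> t" for t
      using that assms by (simp add: mult_left_le_one_le)
    then show "\<forall>x. N (U x) = norm x" "\<forall>y. N (V y) = norm y"
      by (simp_all add: N_def N\<^sub>0_def U_def V_def joint_seminorm_Pair_0 joint_seminorm_0_Pair)
  qed
  also have "\<dots> \<le> hausdorff_dist dist (f ` cball 0 1) (g ` cball 0 1) + 2 * \<epsilon>"
  proof (rule hausdorff_dist_image_le[where K=2])
    fix x y assume "x \<in> cball (0::'a) 1" "y \<in> cball (0::'b) 1"
    then have "norm x \<le> 1" "norm y \<le> 1" by simp_all
    then show "dist (f x) (g y) \<le> 2"
      using dist_triangle[of "f x" "g y" 0] dist_f_0 dist_g_0 by (simp add: dist_commute)
    show "0 \<le> N (U x - V y)"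
      using \<open>0 < \<epsilon>\<close> by (simp add: N_UV N\<^sub>0_def le_max_iff_disj)
    have "\<epsilon> * norm (x, - y) \<le> 2 * \<epsilon>"
      using norm_Pair_le[of x "- y"] \<open>norm x \<le> 1\<close> \<open>norm y \<le> 1\<close> \<open>0 < \<epsilon>\<close> by simp
    then show "N (U x - V y) \<le> dist (f x) (g y) + 2 * \<epsilon>"
      unfolding N_UV N\<^sub>0_def using joint_seminorm_le_dist[of x y] \<open>0 < \<epsilon>\<close> zero_le_dist[of "f x" "g y"]
      by (intro max.boundedI) linarith+
  qed auto
  finally show ?thesis .
qed

end

theorem theorem2p5:
  fixes f :: "'a::banach \<Rightarrow> 'z::{real_vector, metric_space}"
    and g :: "'b::banach \<Rightarrow> 'z"
  assumes transl_inv: "\<forall>x y z::'z. dist (x + z) (y + z) = dist x y"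
    and add_cont: "continuous_on UNIV (\<lambda>p::'z \<times> 'z. fst p + snd p)"
    and scale_cont: "continuous_on UNIV (\<lambda>p::real \<times> 'z. fst p *\<^sub>R snd p)"
    and lin_f: "linear f" and lin_g: "linear g"
    and iso_f: "\<forall>x1 x2. dist (f x1) (f x2) = norm (x1 - x2)"
    and iso_g: "\<forall>y1 y2. dist (g y1) (g y2) = norm (y1 - y2)"
  shows "kadets_dist TYPE('a) TYPE('b) \<le> hausdorff_dist dist (f ` cball 0 1) (g ` cball 0 1)"
proof (rule field_le_epsilon)
  interpret isometric_linear_embeddings f g
    using transl_inv lin_f lin_g iso_f iso_g
    by (intro isometric_linear_embeddings.intro translation_invariant_metric.intro
        isometric_linear_embeddings_axioms.intro)
  fix e :: real assume "0 < e"
  then show "kadets_dist TYPE('a) TYPE('b) \<le> hausdorff_dist dist (f ` cball 0 1) (g ` cball 0 1) + e"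
    using kadets_dist_le_hausdorff_dist_plus[of "min 1 (e / 2)"] by linarith
qed

end
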